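(* If the semigroup $\mathbb NA$ is scored, then for every $\boldsymbol\alpha\in\mathbb C^d$ the equivalence class $[\boldsymbol\alpha]$ is extreme.
   Context: $A\subset\mathbb Z^d$ is a finite set generating the group $\mathbb Z^d$; $\mathbb NA$ its monoid. For a facet $\sigma$ of the cone $\mathbb R_{\ge0}A$, $F_\sigma$ is the unique linear form (extended $\mathbb C$-linearly) with $F_\sigma(\mathbb R_{\ge0}A)\ge0$, $F_\sigma(\sigma)=0$, $F_\sigma(\mathbb Z^d)=\mathbb Z$. $\mathbb NA$ is scored if $\mathbb NA=\bigcap_{\sigma\text{ facet}}\{\mathbf a\in\mathbb Z^d:F_\sigma(\mathbf a)\in F_\sigma(\mathbb NA)\}$. For a face $\tau$, $E_\tau(\boldsymbol\alpha)=\{\boldsymbol\lambda\in\mathbb C(A\cap\tau)/\mathbb Z(A\cap\tau):\boldsymbol\alpha-\boldsymbol\lambda\in\mathbb NA+\mathbb Z(A\cap\tau)\}$, called full if it has $[\mathbb Q(A\cap\tau)\cap\mathbb Z^d:\mathbb Z(A\cap\tau)]$ elements; $\boldsymbol\alpha\sim\boldsymbol\beta$ iff $E_\tau(\boldsymbol\alpha)=E_\tau(\boldsymbol\beta)$ for all faces, $[\boldsymbol\alpha]$ the class. $\mathcal F_+(\boldsymbol\alpha)=\{\sigma:F_\sigma(\boldsymbol\alpha)\in F_\sigma(\mathbb NA)\}$. ${\rm Face}(\boldsymbol\alpha)$ is the set of faces $\tau$ such that $\boldsymbol\alpha-\boldsymbol\lambda\in\mathbb Z^d$ for some $\boldsymbol\lambda\in\mathbb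 C(A\cap\tau)$ and every facet containing $\tau$ lies in $\mathcal F_+(\boldsymbol\alpha)$. $[\boldsymbol\alpha]$ is extreme if $E_\tau(\boldsymbol\alpha)$ is full for all $\tau\in{\rm Face}(\boldsymbol\alpha)$ and empty for all $\tau\notin{\rm Face}(\boldsymbol\alpha)$. *)

theory Defs
  imports "HOL-Analysis.Analysis"
begin

text \<open>Ambient lattice Z^d is int^'d; the dimension d is the cardinality of the finite type 'd.\<close>

definition rvec :: "int^'d \<Rightarrow> real^'d" where
  "rvec z = (\<chi> i. real_of_int (z$i))"

definition cvec :: "int^'d \<Rightarrow> complex^'d" where
  "cvec z = (\<chi> i. complex_of_int (z$i))"

definition monoidN :: "(int^'d) set \<Rightarrow> (int^'d) set" where
  "monoidN A = {\<Sum>a\<in>A. int (n a) *s a | n. True}"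

definition zspan :: "(int^'d) set \<Rightarrow> (int^'d) set" where
  "zspan B = {\<Sum>a\<in>B. k a *s a | k. True}"

definition cspan :: "(int^'d) set \<Rightarrow> (complex^'d) set" where
  "cspan B = {\<Sum>a\<in>B. c a *s cvec a | c. True}"

definition qspan :: "(int^'d) set \<Rightarrow> (real^'d) set" where
  "qspan B = {\<Sum>a\<in>B. q a *\<^sub>R rvec a | q. \<forall>a\<in>B. q a \<in> \<rat>}"

definition cone_of :: "(int^'d) set \<Rightarrow> (real^'d) set" where
  "cone_of A = {\<Sum>a\<in>A. c a *\<^sub>R rvec a | c. \<forall>a\<in>A. 0 \<le> c a}"

definition faces :: "(int^'d) set \<Rightarrow> (real^'d) set set" where
  "faces A = {\<tau>. \<tau> face_of cone_of A \<and> \<tau> \<noteq> {}}"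

definition facets :: "(int^'d) set \<Rightarrow> (real^'d) set set" where
  "facets A = {\<sigma>. \<sigma> face_of cone_of A \<and> \<sigma> \<noteq> {} \<and>
                  aff_dim \<sigma> = aff_dim (cone_of A) - 1}"

definition facet_form :: "(int^'d) set \<Rightarrow> (real^'d) set \<Rightarrow> real^'d" where
  "facet_form A \<sigma> = (THE w. (\<forall>x\<in>cone_of A. 0 \<le> w \<bullet> x) \<and> (\<forall>x\<in>\<sigma>. w \<bullet> x = 0)
                        \<and> (\<lambda>z. w \<bullet> rvec z) ` UNIV = \<int>)"

definition Fc :: "(int^'d) set \<Rightarrow> (real^'d) set \<Rightarrow> complex^'d \<Rightarrow> complex" where
  "Fc A \<sigma> \<alpha> = (\<Sum>i\<in>UNIV. complex_of_real (facet_form A \<sigma> $ i) * \<alpha> $ i)"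

definition scored :: "(int^'d) set \<Rightarrow> bool" where
  "scored A \<longleftrightarrow> monoidN A =
     {z. \<forall>\<sigma>\<in>facets A. Fc A \<sigma> (cvec z) \<in> (\<lambda>a. Fc A \<sigma> (cvec a)) ` monoidN A}"

definition Fplus :: "(int^'d) set \<Rightarrow> complex^'d \<Rightarrow> (real^'d) set set" where
  "Fplus A \<alpha> = {\<sigma>\<in>facets A. Fc A \<sigma> \<alpha> \<in> (\<lambda>a. Fc A \<sigma> (cvec a)) ` monoidN A}"

definition Atau :: "(int^'d) set \<Rightarrow> (real^'d) set \<Rightarrow> (int^'d) set" where
  "Atau A \<tau> = {a\<in>A. rvec a \<in> \<tau>}"

text \<open>The index [Q(A\<inter>tau) \<inter> Z^d : Z(A\<inter>tau)], as the number of cosets.\<close>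
definition lattice_index :: "(int^'d) set \<Rightarrow> (real^'d) set \<Rightarrow> nat" where
  "lattice_index A \<tau> =
     card {(\<lambda>x. y + x) ` zspan (Atau A \<tau>) | y. rvec y \<in> qspan (Atau A \<tau>)}"

definition Eset :: "(int^'d) set \<Rightarrow> (real^'d) set \<Rightarrow> complex^'d \<Rightarrow> (complex^'d) set set" where
  "Eset A \<tau> \<alpha> = {(\<lambda>x. l + cvec x) ` zspan (Atau A \<tau>) | l.
       l \<in> cspan (Atau A \<tau>) \<and>
       \<alpha> - l \<in> cvec ` {m + z | m z. m \<in> monoidN A \<and> z \<in> zspan (Atau A \<tau>)}}"

definition full :: "(int^'d) set \<Rightarrow> (real^'d) set \<Rightarrow> complex^'d \<Rightarrow> bool" where
  "full A \<tau> \<alpha> \<longleftrightarrow> card (Eset A \<tau> \<alpha>) = lattice_index A \<tau>"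

definition Face :: "(int^'d) set \<Rightarrow> complex^'d \<Rightarrow> (real^'d) set set" where
  "Face A \<alpha> = {\<tau>\<in>faces A. (\<exists>l\<in>cspan (Atau A \<tau>). \<alpha> - l \<in> range cvec) \<and>
                     (\<forall>\<sigma>\<in>facets A. \<tau> \<subseteq> \<sigma> \<longrightarrow> \<sigma> \<in> Fplus A \<alpha>)}"

text \<open>[alpha] is extreme (the defining condition is phrased via the representative alpha).\<close>
definition extreme :: "(int^'d) set \<Rightarrow> complex^'d \<Rightarrow> bool" where
  "extreme A \<alpha> \<longleftrightarrow> (\<forall>\<tau>\<in>Face A \<alpha>. full A \<tau> \<alpha>) \<and>
                     (\<forall>\<tau>\<in>faces A - Face A \<alpha>. Eset A \<tau> \<alpha> = {})"

end

theory Submission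
  imports Defs
begin

text \<open>
  A facet \<open>\<sigma>\<close> spans a hyperplane spanned by lattice points, so by Cramer's rule it has an
  integral normal vector; rescaling it to be primitive and nonnegative on the cone gives the unique
  form \<open>F\<^sub>\<sigma>\<close>.

  If \<open>E\<^sub>\<tau>(\<alpha>)\<close> contains a coset \<open>\<lambda> + \<int>(A \<inter> \<tau>)\<close>, then every \<open>F\<^sub>\<sigma>\<close> with
  \<open>\<tau> \<subseteq> \<sigma>\<close> kills \<open>\<lambda>\<close> and \<open>\<int>(A \<inter> \<tau>)\<close>, so \<open>F\<^sub>\<sigma>(\<alpha>) \<in> F\<^sub>\<sigma>(\<nat>A)\<close> and
  \<open>\<tau> \<in> Face(\<alpha>)\<close>.

  Conversely let \<open>\<tau> \<in> Face(\<alpha>)\<close>. The key point is that a lattice point \<open>z\<close> with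
  \<open>F\<^sub>\<sigma>(z) \<in> F\<^sub>\<sigma>(\<nat>A)\<close> for all facets \<open>\<sigma> \<supseteq> \<tau>\<close> lies in
  \<open>\<nat>A + \<int>(A \<inter> \<tau>)\<close>: each \<open>F\<^sub>\<sigma>(\<nat>A)\<close> contains all large integers, and
  \<open>p = \<Sum>(A \<inter> \<tau>)\<close> vanishes on the facets containing \<open>\<tau>\<close> and is positive on the others,
  so \<open>z + N p\<close> satisfies the scoredness criterion for large \<open>N\<close>. Fixing \<open>\<lambda>\<^sub>0\<close> with
  \<open>\<alpha> - \<lambda>\<^sub>0 \<in> \<int>\<^sup>d\<close>, it follows that \<open>E\<^sub>\<tau>(\<alpha>)\<close> consists exactly of the cosets
  \<open>\<lambda>\<^sub>0 - y + \<int>(A \<inter> \<tau>)\<close> with \<open>y \<in> \<int>\<^sup>d \<inter> \<complex>(A \<inter> \<tau>)\<close>, and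
  \<open>\<int>\<^sup>d \<inter> \<complex>(A \<inter> \<tau>) = \<int>\<^sup>d \<inter> \<rat>(A \<inter> \<tau>)\<close> by Cramer's rule again; hence
  \<open>E\<^sub>\<tau>(\<alpha>)\<close> is full.
\<close>

section \<open>Lattice points and spans\<close>

lemma rvec_nth [simp]: "rvec z $ i = real_of_int (z $ i)"
  by (simp add: rvec_def)

lemma cvec_nth [simp]: "cvec z $ i = complex_of_int (z $ i)"
  by (simp add: cvec_def)

lemma rvec_0 [simp]: "rvec 0 = 0"
  and rvec_add: "rvec (x + y) = rvec x + rvec y"
  and rvec_diff: "rvec (x - y) = rvec x - rvec y"
  and rvec_smult: "rvec (k *s x) = of_int k *\<^sub>R rvec x"
  by (simp_all add: vec_eq_iff)

lemma rvec_sum: "rvec (sum f S) = (\<Sum>x\<in>S. rvec (f x))"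
  by (induction S rule: infinite_finite_induct) (auto simp: rvec_add)

lemma inj_rvec: "inj rvec"
  by (rule injI) (simp add: vec_eq_iff)

lemma cvec_add: "cvec (x + y) = cvec x + cvec y"
  and cvec_diff: "cvec (x - y) = cvec x - cvec y"
  and cvec_minus: "cvec (- x) = - cvec x"
  by (simp_all add: vec_eq_iff)

lemma inj_cvec: "inj cvec"
  by (rule injI) (simp add: vec_eq_iff)

lemma inner_rvec: "w \<bullet> rvec z = (\<Sum>i\<in>UNIV. w $ i * real_of_int (z $ i))"
  by (simp add: inner_vec_def)

lemma Fc_cvec: "Fc A \<sigma> (cvec z) = complex_of_real (facet_form A \<sigma> \<bullet> rvec z)"
  by (simp add: Fc_def inner_rvec)

lemma Fc_add: "Fc A \<sigma> (x + y) = Fc A \<sigma> x + Fc A \<sigma> y"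
  by (simp add: Fc_def distrib_left sum.distrib)

lemma Fc_diff: "Fc A \<sigma> (x - y) = Fc A \<sigma> x - Fc A \<sigma> y"
  by (simp add: Fc_def right_diff_distrib sum_subtractf)

lemma Fc_sum_scale: "Fc A \<sigma> (\<Sum>b\<in>B. c b *s x b) = (\<Sum>b\<in>B. c b * Fc A \<sigma> (x b))"
  by (simp add: Fc_def sum_distrib_left algebra_simps sum.swap[of _ UNIV])

lemma monoidN_0: "0 \<in> monoidN A"
  unfolding monoidN_def by (auto intro!: exI[of _ "\<lambda>_. 0"])

lemma monoidN_add: "x \<in> monoidN A \<Longrightarrow> y \<in> monoidN A \<Longrightarrow> x + y \<in> monoidN A"
  unfolding monoidN_def
  apply clarify
  subgoal for m n by (rule exI[of _ "\<lambda>a. m a + n a"]) (simp add: sum.distrib)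
  done

lemma zspan_smult: "x \<in> zspan B \<Longrightarrow> k *s x \<in> zspan B"
  unfolding zspan_def
  apply clarify
  subgoal for c by (rule exI[of _ "\<lambda>a. k * c a"]) (simp add: vec_eq_iff sum_distrib_left mult.assoc)
  done

lemma zspan_minus: "x \<in> zspan B \<Longrightarrow> - x \<in> zspan B"
  using zspan_smult[of x B "-1"] by (simp add: vector_sneg_minus1[symmetric])

lemma cspan_add: "x \<in> cspan B \<Longrightarrow> y \<in> cspan B \<Longrightarrow> x + y \<in> cspan B"
  unfolding cspan_def
  apply clarify
  subgoal for c d by (rule exI[of _ "\<lambda>a. c a + d a"]) (simp add: sum.distrib)
  done

lemma cspan_smult: "x \<in> cspan B \<Longrightarrow> k *s x \<in> cspan B"
  unfolding cspan_def
  apply clarify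
  subgoal for c by (rule exI[of _ "\<lambda>a. k * c a"]) (simp add: vec_eq_iff sum_distrib_left mult.assoc)
  done

lemma cspan_diff: "x \<in> cspan B \<Longrightarrow> y \<in> cspan B \<Longrightarrow> x - y \<in> cspan B"
  using cspan_add[of x B "(-1) *s y"] cspan_smult[of y B "-1"]
  by (simp add: vector_sneg_minus1[symmetric])

lemma zspan_eq_diff_monoidN:
  assumes "z \<in> zspan A"
  obtains m1 m2 where "m1 \<in> monoidN A" "m2 \<in> monoidN A" "z = m1 - m2"
proof -
  obtain k where k: "z = (\<Sum>a\<in>A. k a *s a)"
    using assms unfolding zspan_def by blast
  show thesis
  proof (rule that)
    show "(\<Sum>a\<in>A. int (nat (k a)) *s a) \<in> monoidN A"
      unfolding monoidN_def by (auto intro: exI[of _ "\<lambda>a. nat (k a)"])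
    show "(\<Sum>a\<in>A. int (nat (- k a)) *s a) \<in> monoidN A"
      unfolding monoidN_def by (auto intro: exI[of _ "\<lambda>a. nat (- k a)"])
    have "int (nat (k a)) *s a - int (nat (- k a)) *s a = k a *s a" for a
      by (simp add: vec_eq_iff left_diff_distrib[symmetric])
    then show "z = (\<Sum>a\<in>A. int (nat (k a)) *s a) - (\<Sum>a\<in>A. int (nat (- k a)) *s a)"
      by (simp add: k sum_subtractf[symmetric])
  qed
qed

lemma rvec_zspan_in_span:
  assumes "z \<in> zspan B"
  shows "rvec z \<in> span (rvec ` B)"
proof -
  obtain k where "z = (\<Sum>b\<in>B. k b *s b)"
    using assms unfolding zspan_def by blast
  then have "rvec z = (\<Sum>b\<in>B. of_int (k b) *\<^sub>R rvec b)"
    by (simp add: rvec_sum rvec_smult)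
  moreover have "(\<Sum>b\<in>B. of_int (k b) *\<^sub>R rvec b) \<in> span (rvec ` B)"
    by (intro span_sum span_scale span_base imageI)
  ultimately show ?thesis
    by simp
qed

lemma qspan_subset_span: "qspan B \<subseteq> span (rvec ` B)"
  unfolding qspan_def by clarify (intro span_sum span_scale span_base imageI)

lemma cvec_in_cspan_if_qspan:
  assumes "rvec y \<in> qspan B"
  shows "cvec y \<in> cspan B"
proof -
  obtain q where q: "rvec y = (\<Sum>b\<in>B. q b *\<^sub>R rvec b)"
    using assms unfolding qspan_def by blast
  have "cvec y = (\<Sum>b\<in>B. complex_of_real (q b) *s cvec b)"
  proof (subst vec_eq_iff, intro allI)
    fix i
    have "real_of_int (y $ i) = (\<Sum>b\<in>B. q b * real_of_int (b $ i))"
      using arg_cong[OF q, of "\<lambda>v. v $ i"] by simp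
    then have "complex_of_real (real_of_int (y $ i)) = complex_of_real (\<Sum>b\<in>B. q b * real_of_int (b $ i))"
      by simp
    then show "cvec y $ i = (\<Sum>b\<in>B. complex_of_real (q b) *s cvec b) $ i"
      by simp
  qed
  then show ?thesis
    unfolding cspan_def by (auto intro: exI[of _ "\<lambda>b. complex_of_real (q b)"])
qed

lemma rvec_in_span_if_cspan:
  assumes "cvec y \<in> cspan B"
  shows "rvec y \<in> span (rvec ` B)"
proof -
  obtain c where c: "cvec y = (\<Sum>b\<in>B. c b *s cvec b)"
    using assms unfolding cspan_def by blast
  have "rvec y = (\<Sum>b\<in>B. Re (c b) *\<^sub>R rvec b)"
  proof (subst vec_eq_iff, intro allI)
    fix i
    have "complex_of_int (y $ i) = (\<Sum>b\<in>B. c b * complex_of_int (b $ i))"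
      using arg_cong[OF c, of "\<lambda>v. v $ i"] by simp
    then have "Re (complex_of_int (y $ i)) = Re (\<Sum>b\<in>B. c b * complex_of_int (b $ i))"
      by simp
    then show "rvec y $ i = (\<Sum>b\<in>B. Re (c b) *\<^sub>R rvec b) $ i"
      by (simp add: Re_sum)
  qed
  also have "\<dots> \<in> span (rvec ` B)"
    by (intro span_sum span_scale span_base imageI)
  finally show ?thesis .
qed

lemma image_reflected_coset:
  fixes Z :: "(int^'d) set"
  assumes "\<And>x. x \<in> Z \<Longrightarrow> - x \<in> Z"
  shows "(\<lambda>x. l - cvec x) ` (\<lambda>x. y + x) ` Z = (\<lambda>x. (l - cvec y) + cvec x) ` Z"
proof (intro equalityI subsetI)
  fix v assume "v \<in> (\<lambda>x. l - cvec x) ` (\<lambda>x. y + x) ` Z"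
  then obtain x where x: "x \<in> Z" "v = l - cvec (y + x)"
    by blast
  then have "v = (l - cvec y) + cvec (- x)"
    by (simp add: cvec_add cvec_minus)
  then show "v \<in> (\<lambda>x. (l - cvec y) + cvec x) ` Z"
    using assms[OF x(1)] by blast
next
  fix v assume "v \<in> (\<lambda>x. (l - cvec y) + cvec x) ` Z"
  then obtain x where x: "x \<in> Z" "v = (l - cvec y) + cvec x"
    by blast
  moreover have "cvec (y + - x) = cvec y - cvec x"
    by (simp add: cvec_diff)
  ultimately have "v = l - cvec (y + - x)"
    by (simp add: diff_diff_eq2)
  then show "v \<in> (\<lambda>x. l - cvec x) ` (\<lambda>x. y + x) ` Z"
    using assms[OF x(1)] by blast
qed

section \<open>The cone and its faces\<close>

lemma convex_cone_cone_of: "convex_cone (cone_of A)"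
  unfolding convex_cone_iff
proof (intro conjI ballI allI impI)
  show "0 \<in> cone_of A"
    unfolding cone_of_def by (auto intro!: exI[of _ "\<lambda>_. 0"])
  fix x y assume "x \<in> cone_of A" "y \<in> cone_of A"
  then obtain c d where "x = (\<Sum>a\<in>A. c a *\<^sub>R rvec a)" "\<forall>a\<in>A. 0 \<le> c a"
    and "y = (\<Sum>a\<in>A. d a *\<^sub>R rvec a)" "\<forall>a\<in>A. 0 \<le> d a"
    unfolding cone_of_def by blast
  then show "x + y \<in> cone_of A"
    unfolding cone_of_def
    by (auto intro!: exI[of _ "\<lambda>a. c a + d a"] simp: sum.distrib scaleR_add_left)
next
  fix x and t :: real assume "x \<in> cone_of A" "0 \<le> t"
  then obtain c where "x = (\<Sum>a\<in>A. c a *\<^sub>R rvec a)" "\<forall>a\<in>A. 0 \<le> c a"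
    unfolding cone_of_def by blast
  with \<open>0 \<le> t\<close> show "t *\<^sub>R x \<in> cone_of A"
    unfolding cone_of_def by (auto intro!: exI[of _ "\<lambda>a. t * c a"] simp: scaleR_sum_right)
qed

lemma rvec_in_cone_of:
  assumes "finite A" "a \<in> A"
  shows "rvec a \<in> cone_of A"
proof -
  have "(\<Sum>b\<in>A. (if b = a then 1 else 0) *\<^sub>R rvec b) = rvec a"
    using assms by (simp add: if_distrib[of "\<lambda>c. c *\<^sub>R _"] cong: if_cong)
  then show ?thesis
    unfolding cone_of_def by (intro CollectI exI[of _ "\<lambda>b. if b = a then 1 else 0"]) auto
qed

lemma rvec_monoidN_in_cone_of:
  assumes "m \<in> monoidN A"
  shows "rvec m \<in> cone_of A"
proof -
  obtain n where "m = (\<Sum>a\<in>A. int (n a) *s a)"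
    using assms unfolding monoidN_def by blast
  then have "rvec m = (\<Sum>a\<in>A. real (n a) *\<^sub>R rvec a)"
    by (simp add: rvec_sum rvec_smult)
  then show ?thesis
    unfolding cone_of_def by (auto intro!: exI[of _ "\<lambda>a. real (n a)"])
qed

lemma cone_of_eq_convex_cone_hull:
  assumes "finite A"
  shows "cone_of A = convex_cone hull (rvec ` A)"
proof
  show "convex_cone hull rvec ` A \<subseteq> cone_of A"
    using assms by (intro hull_minimal) (auto simp: rvec_in_cone_of convex_cone_cone_of)
  show "cone_of A \<subseteq> convex_cone hull rvec ` A"
  proof
    fix x assume "x \<in> cone_of A"
    then obtain c where c: "x = (\<Sum>a\<in>A. c a *\<^sub>R rvec a)" "\<forall>a\<in>A. 0 \<le> c a"
      unfolding cone_of_def by blast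
    have "(\<Sum>a\<in>S. c a *\<^sub>R rvec a) \<in> convex_cone hull rvec ` A" if "S \<subseteq> A" for S
      using finite_subset[OF that assms] that
    proof (induction S)
      case empty
      then show ?case by (simp add: convex_cone_hull_contains_0)
    next
      case (insert a S)
      then show ?case
        using c(2) by (simp add: convex_cone_hull_add convex_cone_hull_mul hull_inc)
    qed
    then show "x \<in> convex_cone hull rvec ` A"
      using c(1) by blast
  qed
qed

lemma polyhedron_cone_of: "finite A \<Longrightarrow> polyhedron (cone_of A)"
  by (simp add: cone_of_eq_convex_cone_hull polyhedron_convex_cone_hull)

lemma conic_face_of_convex_cone: "convex_cone S \<Longrightarrow> T face_of S \<Longrightarrow> conic T"
  using face_of_conic by (auto simp: convex_cone_def)

lemma zero_in_face_of_convex_cone: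
  "convex_cone S \<Longrightarrow> T face_of S \<Longrightarrow> T \<noteq> {} \<Longrightarrow> 0 \<in> T"
  using conic_contains_0 conic_face_of_convex_cone by blast

lemma face_of_convex_cone_add_left:
  assumes "convex_cone S" "T face_of S" "u \<in> S" "v \<in> S" "u + v \<in> T"
  shows "u \<in> T"
proof -
  have mid: "midpoint u v \<in> T"
    using conic_mul[OF conic_face_of_convex_cone[OF assms(1,2)] assms(5), of "1/2"]
    by (simp add: midpoint_def)
  show ?thesis
  proof (cases "u = v")
    case True
    then show ?thesis using mid by simp
  next
    case False
    then show ?thesis
      using face_ofD[OF assms(2) _ assms(3,4) mid] by simp
  qed
qed

lemma face_of_cone_of_generator:
  assumes "finite A" "\<tau> face_of cone_of A" "\<forall>a\<in>A. 0 \<le> c a"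
    "(\<Sum>a\<in>A. c a *\<^sub>R rvec a) \<in> \<tau>" "a0 \<in> A" "0 < c a0"
  shows "rvec a0 \<in> \<tau>"
proof -
  have split: "(\<Sum>a\<in>A. c a *\<^sub>R rvec a) = c a0 *\<^sub>R rvec a0 + (\<Sum>a\<in>A - {a0}. c a *\<^sub>R rvec a)"
    using assms(1,5) by (simp add: sum.remove)
  have rest: "(\<Sum>a\<in>A - {a0}. c a *\<^sub>R rvec a) \<in> cone_of A"
    unfolding cone_of_def
    by (intro CollectI exI[of _ "\<lambda>a. if a = a0 then 0 else c a"])
      (use assms(1,3,5) in \<open>auto simp: sum.remove intro!: sum.cong\<close>)
  have "c a0 *\<^sub>R rvec a0 \<in> cone_of A"
    using assms(6) by (intro convex_cone_scaleR convex_cone_cone_of rvec_in_cone_of assms(1,5)) simp_all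
  then have "c a0 *\<^sub>R rvec a0 \<in> \<tau>"
    using face_of_convex_cone_add_left[OF convex_cone_cone_of assms(2) _ rest] assms(4) split
    by simp
  then show ?thesis
    using conic_mul[OF conic_face_of_convex_cone[OF convex_cone_cone_of assms(2)], of _ "1 / c a0"]
      assms(6)
    by fastforce
qed

lemma span_face_of:
  assumes "finite A" "\<tau> face_of cone_of A"
  shows "span \<tau> = span (rvec ` Atau A \<tau>)"
proof
  show "span (rvec ` Atau A \<tau>) \<subseteq> span \<tau>"
    by (rule span_mono) (auto simp: Atau_def)
  have "\<tau> \<subseteq> span (rvec ` Atau A \<tau>)"
  proof
    fix x assume "x \<in> \<tau>"
    then obtain c where c: "x = (\<Sum>a\<in>A. c a *\<^sub>R rvec a)" "\<forall>a\<in>A. 0 \<le> c a"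
      using face_of_imp_subset[OF assms(2)] unfolding cone_of_def by blast
    have "c a *\<^sub>R rvec a \<in> span (rvec ` Atau A \<tau>)" if "a \<in> A" for a
    proof (cases "c a = 0")
      case False
      then have "rvec a \<in> \<tau>"
        using face_of_cone_of_generator[OF assms c(2)] \<open>x \<in> \<tau>\<close> c that
        by (simp add: order_less_le)
      then show ?thesis
        using that by (intro span_scale span_base) (auto simp: Atau_def)
    qed (simp add: span_zero)
    then show "x \<in> span (rvec ` Atau A \<tau>)"
      unfolding c(1) by (intro span_sum) auto
  qed
  then show "span \<tau> \<subseteq> span (rvec ` Atau A \<tau>)"
    by (intro span_minimal subspace_span)
qed

lemma finite_facets:
  assumes "finite A"
  shows "finite (facets A)"
proof (rule finite_subset)
  show "facets A \<subseteq> {T. T face_of cone_of A}"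
    unfolding facets_def by blast
  show "finite {T. T face_of cone_of A}"
    by (rule finite_polyhedron_faces[OF polyhedron_cone_of[OF assms]])
qed

lemma facet_supporting_hyperplane:
  assumes "finite A" "\<sigma> \<in> facets A"
  obtains a where "a \<noteq> 0" "\<forall>x\<in>cone_of A. 0 \<le> a \<bullet> x" "\<sigma> = cone_of A \<inter> {x. a \<bullet> x = 0}"
proof -
  have "\<sigma> facet_of cone_of A"
    using assms(2) by (simp add: facets_def facet_of_def)
  then obtain a b where ab: "a \<noteq> 0" "cone_of A \<subseteq> {x. a \<bullet> x \<le> b}"
    "\<sigma> = cone_of A \<inter> {x. a \<bullet> x = b}"
    using facet_of_polyhedron[OF polyhedron_cone_of[OF assms(1)]] by blast
  have "0 \<in> \<sigma>"
    using assms(2) zero_in_face_of_convex_cone[OF convex_cone_cone_of]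
    by (auto simp: facets_def)
  then have "b = 0"
    using ab(3) by simp
  show thesis
  proof
    show "- a \<noteq> 0"
      using ab(1) by simp
    show "\<forall>x\<in>cone_of A. 0 \<le> - a \<bullet> x"
      using ab(2) \<open>b = 0\<close> by auto
    show "\<sigma> = cone_of A \<inter> {x. - a \<bullet> x = 0}"
      using ab(3) \<open>b = 0\<close> by auto
  qed
qed

section \<open>Lattice bases and Cramer's rule\<close>

lemma det_Ints:
  fixes M :: "'a::comm_ring_1^'n^'n"
  assumes "\<And>i j. M $ i $ j \<in> \<int>"
  shows "det M \<in> \<int>"
  unfolding det_def using assms by (intro Ints_sum Ints_mult Ints_prod) auto

lemma cramer_Ints:
  fixes M :: "real^'n^'n"
  assumes "\<And>i j. M $ i $ j \<in> \<int>" "\<And>i. b $ i \<in> \<int>" "det M \<noteq> 0" "M *v x = b"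
  shows "det M * x $ k \<in> \<int>"
proof -
  have "x $ k = det (\<chi> i j. if j = k then b $ i else M $ i $ j) / det M"
    using cramer[OF assms(3)] assms(4) by simp
  moreover have "det (\<chi> i j. if j = k then b $ i else M $ i $ j) \<in> \<int>"
    using assms(1,2) by (intro det_Ints) simp
  ultimately show ?thesis
    using assms(3) by simp
qed

lemma matrix_of_columns_mult: "(\<chi> i j. f j $ i) *v c = (\<Sum>j\<in>UNIV. c $ j *\<^sub>R f j)"
  by (simp add: matrix_vector_mult_def vec_eq_iff mult.commute)

lemma det_matrix_of_basis_neq_0:
  fixes f :: "'n \<Rightarrow> real^'n"
  assumes "bij_betw f UNIV T" "independent T"
  shows "det (\<chi> i j. f j $ i) \<noteq> 0"
proof -
  have "c = 0" if "(\<chi> i j. f j $ i) *v c = 0" for c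
  proof -
    define u where "u t = c $ inv_into UNIV f t" for t
    have "(\<Sum>t\<in>T. u t *\<^sub>R t) = (\<Sum>j\<in>UNIV. c $ j *\<^sub>R f j)"
      using assms(1) by (simp add: u_def sum.reindex_bij_betw[symmetric] bij_betw_inv_into_left)
    then have "\<forall>t\<in>T. u t = 0"
      using that assms(2) independentD[OF assms(2) _ order_refl]
      by (auto simp: matrix_of_columns_mult dest: finiteI_independent)
    moreover have "u (f j) = c $ j" "f j \<in> T" for j
      using assms(1) by (auto simp: u_def bij_betw_inv_into_left dest: bij_betwE)
    ultimately show "c = 0"
      by (simp add: vec_eq_iff)
  qed
  then have "inj ((*v) (\<chi> i j. f j $ i))"
    unfolding linear_injective_0[OF matrix_vector_mul_linear] by blast
  then show ?thesis
    using det_nz_iff_inj[OF matrix_vector_mul_linear] matrix_of_matrix_vector_mul by metis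
qed

lemma basis_coords_exist:
  fixes f :: "'n \<Rightarrow> real^'n"
  assumes "bij_betw f UNIV T" "independent T"
  shows "\<exists>c. x = (\<Sum>j\<in>UNIV. c j *\<^sub>R f j)"
proof -
  obtain B where "(\<chi> i j. f j $ i) ** B = mat 1"
    using det_matrix_of_basis_neq_0[OF assms]
    unfolding invertible_det_nz[symmetric] invertible_def by blast
  then have "x = (\<chi> i j. f j $ i) *v (B *v x)"
    by (simp add: matrix_vector_mul_assoc)
  then show ?thesis
    by (auto simp: matrix_of_columns_mult)
qed

lemma matrix_of_lattice_basis_Ints:
  assumes "bij_betw f UNIV T" "T \<subseteq> range rvec"
  shows "(\<chi> i j. f j $ i) $ i $ j \<in> \<int>"
proof -
  have "f j \<in> range rvec"
    using assms bij_betwE by blast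
  then show ?thesis
    by auto
qed

lemma lattice_basis_coords_Ints:
  assumes "bij_betw f UNIV T" "independent T" "T \<subseteq> range rvec"
    "rvec y = (\<Sum>j\<in>UNIV. c j *\<^sub>R f j)"
  shows "det (\<chi> i j. f j $ i) * c j \<in> \<int>"
proof -
  have "(\<chi> i j. f j $ i) *v (\<chi> j. c j) = rvec y"
    using assms(4) by (simp add: matrix_of_columns_mult)
  from cramer_Ints[OF matrix_of_lattice_basis_Ints[OF assms(1,3)] _
      det_matrix_of_basis_neq_0[OF assms(1,2)] this]
  show ?thesis
    by simp
qed

lemma Basis_subset_range_rvec: "(Basis :: (real^'d) set) \<subseteq> range rvec"
proof
  fix b :: "real^'d" assume "b \<in> Basis"
  then obtain i where "b = axis i 1"
    by (auto simp: Basis_vec_def)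
  then have "b = rvec (axis i 1)"
    by (simp add: vec_eq_iff axis_def)
  then show "b \<in> range rvec" by blast
qed

lemma extend_to_lattice_basis:
  fixes S :: "(real^'d) set"
  assumes "S \<subseteq> range rvec" "independent S"
  obtains f :: "'d \<Rightarrow> real^'d" and T where "S \<subseteq> T" "T \<subseteq> range rvec" "independent T"
    "bij_betw f UNIV T"
proof -
  obtain T where T: "S \<subseteq> T" "T \<subseteq> S \<union> Basis" "independent T" "S \<union> Basis \<subseteq> span T"
    using maximal_independent_subset_extend[of S "S \<union> Basis"] assms(2) by blast
  have "span Basis \<subseteq> span T"
    using T(4) by (intro span_minimal subspace_span) auto
  then have "span T = UNIV"
    by auto
  then have "card T = CARD('d)"
    using dim_eq_card_independent[OF T(3)] dim_span[of T] by simp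
  then obtain f :: "'d \<Rightarrow> real^'d" where "bij_betw f UNIV T"
    using finite_same_card_bij[of "UNIV :: 'd set" T] finiteI_independent[OF T(3)] by auto
  moreover have "T \<subseteq> range rvec"
    using T(2) assms(1) Basis_subset_range_rvec by blast
  ultimately show thesis
    using that T(1,3) by blast
qed

lemma lattice_point_coords_Rats:
  fixes S :: "(real^'d) set"
  assumes "S \<subseteq> range rvec" "independent S" "rvec y = (\<Sum>s\<in>S. u s *\<^sub>R s)" "s \<in> S"
  shows "u s \<in> \<rat>"
proof -
  obtain f :: "'d \<Rightarrow> real^'d" and T where T: "S \<subseteq> T" "T \<subseteq> range rvec" "independent T"
    and f: "bij_betw f UNIV T"
    using extend_to_lattice_basis[OF assms(1,2)] .
  define D where "D = det (\<chi> i j. f j $ i)"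
  have D: "D \<noteq> 0" "D \<in> \<int>"
    unfolding D_def using det_matrix_of_basis_neq_0[OF f T(3)]
    by (auto intro: det_Ints matrix_of_lattice_basis_Ints[OF f T(2)])
  define v where "v t = (if t \<in> S then u t else 0)" for t
  have "rvec y = (\<Sum>t\<in>T. v t *\<^sub>R t)"
    unfolding assms(3) v_def
    using T(1) finiteI_independent[OF T(3)]
    by (intro sum.mono_neutral_cong_left) auto
  also have "\<dots> = (\<Sum>j\<in>UNIV. v (f j) *\<^sub>R f j)"
    using sum.reindex_bij_betw[OF f, of "\<lambda>t. v t *\<^sub>R t"] by simp
  finally have "D * v (f j) \<in> \<int>" for j
    unfolding D_def by (rule lattice_basis_coords_Ints[OF f T(3,2)])
  moreover obtain j where "f j = s"
    using f T(1) assms(4) by (metis bij_betw_inv_into_right subsetD)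
  ultimately have "D * u s \<in> \<int>"
    using assms(4) by (metis v_def)
  moreover have "u s = (D * u s) / D"
    using D(1) by simp
  ultimately show ?thesis
    using D(2) Ints_subset_Rats by (metis Rats_divide subsetD)
qed

lemma rvec_in_qspan:
  assumes "finite B" "rvec y \<in> span (rvec ` B)"
  shows "rvec y \<in> qspan B"
proof -
  obtain S where S: "S \<subseteq> rvec ` B" "independent S" "rvec ` B \<subseteq> span S"
    using maximal_independent_subset[of "rvec ` B"] by blast
  have "rvec y \<in> span S"
    using assms(2) span_minimal[OF S(3) subspace_span] by blast
  then obtain u where u: "rvec y = (\<Sum>s\<in>S. u s *\<^sub>R s)"
    using span_finite[OF finiteI_independent[OF S(2)]] by auto
  define q where "q b = (if rvec b \<in> S then u (rvec b) else 0)" for b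
  have "(\<Sum>b\<in>B. q b *\<^sub>R rvec b) = (\<Sum>b\<in>{b\<in>B. rvec b \<in> S}. u (rvec b) *\<^sub>R rvec b)"
    unfolding q_def using assms(1) by (intro sum.mono_neutral_cong_right) auto
  also have "\<dots> = (\<Sum>s\<in>S. u s *\<^sub>R s)"
  proof -
    have "inj_on rvec {b\<in>B. rvec b \<in> S}"
      using inj_rvec by (rule inj_on_subset) simp
    moreover have "S = rvec ` {b\<in>B. rvec b \<in> S}"
      using S(1) by auto
    ultimately show ?thesis
      using sum.reindex[of rvec "{b\<in>B. rvec b \<in> S}" "\<lambda>s. u s *\<^sub>R s"] by simp
  qed
  finally have "rvec y = (\<Sum>b\<in>B. q b *\<^sub>R rvec b)"
    using u by simp
  moreover have "q b \<in> \<rat>" for b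
  proof -
    have "S \<subseteq> range rvec"
      using S(1) by blast
    then show ?thesis
      using lattice_point_coords_Rats[OF _ S(2) u] by (simp add: q_def)
  qed
  ultimately show ?thesis
    unfolding qspan_def by blast
qed

lemma inner_span_eq_0: "\<forall>s\<in>S. a \<bullet> s = 0 \<Longrightarrow> x \<in> span S \<Longrightarrow> a \<bullet> x = 0"
  using orthogonal_to_span[of x S a] by (simp add: orthogonal_def)

lemma inner_sum_orthogonal_but_one:
  fixes f :: "'n::finite \<Rightarrow> 'a::real_inner"
  assumes "\<And>j. j \<noteq> k \<Longrightarrow> a \<bullet> f j = 0"
  shows "a \<bullet> (\<Sum>j\<in>UNIV. c j *\<^sub>R f j) = c k * (a \<bullet> f k)"
proof -
  have "a \<bullet> (\<Sum>j\<in>UNIV. c j *\<^sub>R f j) = (\<Sum>j\<in>UNIV. c j * (a \<bullet> f j))"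
    by (simp add: inner_sum_right)
  also have "\<dots> = c k * (a \<bullet> f k)"
    using assms by (subst sum.remove[of UNIV k]) simp_all
  finally show ?thesis .
qed

lemma inner_neq_0_if_orthogonal_but_one:
  fixes f :: "'n \<Rightarrow> real^'n"
  assumes "bij_betw f UNIV T" "independent T" "\<And>j. j \<noteq> k \<Longrightarrow> a \<bullet> f j = 0" "a \<noteq> 0"
  shows "a \<bullet> f k \<noteq> 0"
proof
  assume "a \<bullet> f k = 0"
  obtain c where c: "a = (\<Sum>j\<in>UNIV. c j *\<^sub>R f j)"
    using basis_coords_exist[OF assms(1,2)] by blast
  have "a \<bullet> a = 0"
    using inner_sum_orthogonal_but_one[where f = f and k = k and a = a and c = c, OF assms(3), folded c]
      \<open>a \<bullet> f k = 0\<close>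
    by simp
  then show False
    using assms(4) by simp
qed

lemma integral_multiple_of_normal:
  fixes a :: "real^'d"
  assumes "T \<subseteq> range rvec" "independent T" "card T = CARD('d)" "e \<in> T"
    "\<forall>s\<in>T - {e}. a \<bullet> s = 0" "a \<noteq> 0"
  obtains k where "k \<noteq> 0" "\<And>i. k * a $ i \<in> \<int>"
proof -
  obtain f :: "'d \<Rightarrow> real^'d" where f: "bij_betw f UNIV T"
    using finite_same_card_bij[of "UNIV :: 'd set" T] finiteI_independent[OF assms(2)] assms(3)
    by auto
  define D where "D = det (\<chi> i j. f j $ i)"
  have "D \<noteq> 0"
    unfolding D_def by (rule det_matrix_of_basis_neq_0[OF f assms(2)])
  obtain j0 where j0: "f j0 = e"
    using f assms(4) by (metis bij_betw_inv_into_right)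
  have a_f: "a \<bullet> f j = 0" if "j \<noteq> j0" for j
  proof -
    have "f j \<in> T"
      using f bij_betwE by blast
    moreover have "f j \<noteq> e"
      using bij_betw_imp_inj_on[OF f] j0 that by (metis inj_eq)
    ultimately show ?thesis
      using assms(5) by blast
  qed
  have a_coords: "a \<bullet> (\<Sum>j\<in>UNIV. c j *\<^sub>R f j) = c j0 * (a \<bullet> e)" for c
    using inner_sum_orthogonal_but_one[where f = f and k = j0 and a = a, OF a_f] j0 by simp
  have "a \<bullet> e \<noteq> 0"
    using inner_neq_0_if_orthogonal_but_one[where k = j0, OF f assms(2) a_f assms(6)] j0 by simp
  show thesis
  proof
    show "D / (a \<bullet> e) \<noteq> 0"
      using \<open>D \<noteq> 0\<close> \<open>a \<bullet> e \<noteq> 0\<close> by simp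
    fix i
    obtain c where c: "axis i 1 = (\<Sum>j\<in>UNIV. c j *\<^sub>R f j)"
      using basis_coords_exist[OF f assms(2)] by blast
    have "rvec (axis i 1) = axis i 1"
      by (simp add: vec_eq_iff axis_def)
    then have "D * c j0 \<in> \<int>"
      unfolding D_def using c by (intro lattice_basis_coords_Ints[OF f assms(2,1)]) simp
    moreover have "a $ i = c j0 * (a \<bullet> e)"
      using a_coords[of c, folded c] by (simp add: inner_axis)
    ultimately show "D / (a \<bullet> e) * a $ i \<in> \<int>"
      using \<open>a \<bullet> e \<noteq> 0\<close> by simp
  qed
qed

lemma complement_Basis_vector:
  fixes S :: "(real^'d) set"
  assumes "independent S" "card S + 1 = CARD('d)"
  obtains e where "e \<in> Basis" "e \<notin> span S" "card (insert e S) = CARD('d)"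
    "\<forall>x. \<exists>t. x - t *\<^sub>R e \<in> span S"
proof -
  have "\<not> Basis \<subseteq> span S"
  proof
    assume "Basis \<subseteq> span S"
    then have "span Basis \<subseteq> span S"
      by (intro span_minimal subspace_span)
    then have "CARD('d) \<le> dim S"
      using dim_subset[of "UNIV :: (real^'d) set" "span S"] by simp
    then show False
      using assms dim_eq_card_independent[OF assms(1)] by simp
  qed
  then obtain e where e: "e \<in> Basis" "e \<notin> span S"
    by blast
  then have "e \<notin> S"
    using span_base by blast
  then have card: "card (insert e S) = CARD('d)"
    using assms finiteI_independent[OF assms(1)] by simp
  have "x \<in> span (insert e S)" for x
    using card_ge_dim_independent[of "insert e S" UNIV] independent_insertI[OF e(2) assms(1)] card
    by auto
  then have "\<forall>x. \<exists>t. x - t *\<^sub>R e \<in> span S"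
    using span_breakdown_eq by blast
  then show thesis
    using that e card by blast
qed

lemma proportional_if_same_hyperplane:
  fixes u v e :: "'a::real_inner"
  assumes "\<forall>x. \<exists>t. x - t *\<^sub>R e \<in> V" "\<forall>s\<in>V. u \<bullet> s = 0" "\<forall>s\<in>V. v \<bullet> s = 0" "v \<bullet> e \<noteq> 0"
  shows "u = (u \<bullet> e / (v \<bullet> e)) *\<^sub>R v"
proof (rule vector_eq_rdot[THEN iffD1], rule allI)
  fix x
  obtain t where t: "x - t *\<^sub>R e \<in> V"
    using assms(1) by blast
  have "u \<bullet> (x - t *\<^sub>R e) = 0" "v \<bullet> (x - t *\<^sub>R e) = 0"
    using assms(2,3) t by blast+
  then have "u \<bullet> x = t * (u \<bullet> e)" "v \<bullet> x = t * (v \<bullet> e)"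
    by (simp_all add: inner_diff_right)
  then show "u \<bullet> x = (u \<bullet> e / (v \<bullet> e)) *\<^sub>R v \<bullet> x"
    using assms(4) by simp
qed

section \<open>Subgroups and submonoids of the integers\<close>

lemma int_diff_closed_mult:
  fixes G :: "int set"
  assumes diff: "\<And>m n. m \<in> G \<Longrightarrow> n \<in> G \<Longrightarrow> m - n \<in> G" and "m \<in> G"
  shows "k * m \<in> G"
proof (induction k rule: int_induct[where k = 0])
  case base
  then show ?case
    using diff[OF \<open>m \<in> G\<close> \<open>m \<in> G\<close>] by simp
next
  case (step1 k)
  then show ?case
    using diff[OF step1(2) diff[OF diff[OF \<open>m \<in> G\<close> \<open>m \<in> G\<close>] \<open>m \<in> G\<close>]]
    by (simp add: algebra_simps)
next
  case (step2 k)
  then show ?case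
    using diff[OF step2(2) \<open>m \<in> G\<close>] by (simp add: algebra_simps)
qed

lemma int_subgroup_eq_multiples:
  fixes G :: "int set"
  assumes diff: "\<And>m n. m \<in> G \<Longrightarrow> n \<in> G \<Longrightarrow> m - n \<in> G" and "n \<in> G" "n \<noteq> 0"
  obtains g where "g > 0" "G = range (\<lambda>k. k * g)"
proof -
  have mult: "k * m \<in> G" if "m \<in> G" for k m
    by (rule int_diff_closed_mult[OF _ that]) (rule diff)
  have "\<bar>n\<bar> \<in> G"
    using mult[OF \<open>n \<in> G\<close>, of "sgn n"] by (metis abs_sgn mult.commute)
  then have "\<exists>m::nat. m > 0 \<and> int m \<in> G"
    using \<open>n \<noteq> 0\<close> by (intro exI[of _ "nat \<bar>n\<bar>"]) simp
  define g where "g = int (LEAST m::nat. m > 0 \<and> int m \<in> G)"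
  have g: "g > 0" "g \<in> G"
    using LeastI_ex[OF \<open>\<exists>m::nat. m > 0 \<and> int m \<in> G\<close>] unfolding g_def by auto
  have g_min: "g \<le> m" if "m > 0" "m \<in> G" for m
    using that Least_le[of "\<lambda>m::nat. m > 0 \<and> int m \<in> G" "nat m"] unfolding g_def by simp
  show thesis
  proof
    show "g > 0" by (fact g(1))
    show "G = range (\<lambda>k. k * g)"
    proof
      show "range (\<lambda>k. k * g) \<subseteq> G"
        using mult[OF g(2)] by blast
      show "G \<subseteq> range (\<lambda>k. k * g)"
      proof
        fix m assume "m \<in> G"
        then have "m mod g \<in> G"
          using diff[OF _ mult[OF g(2)], of m "m div g"] by (simp add: minus_div_mult_eq_mod)
        have "m mod g = 0"
        proof (rule ccontr)
          assume "m mod g \<noteq> 0"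
          then have "g \<le> m mod g"
            using g_min \<open>m mod g \<in> G\<close> pos_mod_sign[OF g(1), of m] by simp
          then show False
            using pos_mod_bound[OF g(1), of m] by simp
        qed
        then have "m = (m div g) * g"
          using div_mult_mod_eq[of m g] by simp
        then show "m \<in> range (\<lambda>k. k * g)"
          by (rule image_eqI) simp
      qed
    qed
  qed
qed

lemma primitive_rescaling:
  fixes W :: "real^'d"
  assumes "\<And>i. W $ i \<in> \<int>" "W \<noteq> 0"
  obtains g :: real where "g > 0" "range (\<lambda>z. ((1 / g) *\<^sub>R W) \<bullet> rvec z) = \<int>"
proof -
  define G where "G = {n. \<exists>z. W \<bullet> rvec z = of_int n}"
  have range_W: "range (\<lambda>z. W \<bullet> rvec z) = of_int ` G"
  proof (intro equalityI subsetI)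
    fix x assume "x \<in> range (\<lambda>z. W \<bullet> rvec z)"
    then obtain z where z: "x = W \<bullet> rvec z"
      by blast
    have "W \<bullet> rvec z \<in> \<int>"
      unfolding inner_rvec using assms(1) by (intro Ints_sum Ints_mult) auto
    then obtain n where "W \<bullet> rvec z = of_int n"
      using Ints_cases by blast
    then show "x \<in> of_int ` G"
      unfolding G_def z by blast
  qed (auto simp: G_def intro: sym)
  have diff: "m - n \<in> G" if mn: "m \<in> G" "n \<in> G" for m n
  proof -
    obtain y z where "W \<bullet> rvec y = of_int m" "W \<bullet> rvec z = of_int n"
      using mn unfolding G_def by blast
    then have "W \<bullet> rvec (y - z) = of_int (m - n)"
      by (simp add: rvec_diff inner_diff_right)
    then show ?thesis
      unfolding G_def by blast
  qed
  obtain i where "W $ i \<noteq> 0"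
    using assms(2) by (auto simp: vec_eq_iff)
  moreover obtain n where "W $ i = of_int n"
    using assms(1) Ints_cases by blast
  moreover have "W \<bullet> rvec (axis i 1) = W $ i"
    by (simp add: inner_rvec axis_def if_distrib cong: if_cong)
  ultimately have "n \<in> G" "n \<noteq> 0"
    unfolding G_def by auto
  then obtain g where g: "g > 0" "G = range (\<lambda>k. k * g)"
    using int_subgroup_eq_multiples[OF diff] by blast
  have "range (\<lambda>z. ((1 / of_int g) *\<^sub>R W) \<bullet> rvec z) = (\<lambda>x. x / of_int g) ` range (\<lambda>z. W \<bullet> rvec z)"
    by (simp add: image_image)
  also have "\<dots> = range (of_int :: int \<Rightarrow> real)"
    using g by (simp add: range_W image_image)
  finally show thesis
    using that[of "of_int g"] g(1) by (simp add: Ints_def)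
qed

lemma Ints_nonneg_mult_eq_1:
  fixes x y :: "'a::linordered_idom"
  assumes "x \<in> \<int>" "y \<in> \<int>" "0 \<le> x" "x * y = 1"
  shows "x = 1"
proof -
  obtain m n where "x = of_int m" "y = of_int n"
    using assms(1,2) Ints_cases by metis
  then have "m * n = 1" "0 \<le> m"
    using assms(3,4) by (simp_all flip: of_int_mult)
  then show ?thesis
    using \<open>x = of_int m\<close> by (simp add: zmult_eq_1_iff)
qed

lemma int_submonoid_eventually_mem:
  fixes M :: "int set"
  assumes "0 \<in> M" "\<And>x y. x \<in> M \<Longrightarrow> y \<in> M \<Longrightarrow> x + y \<in> M" "t \<in> M" "t + 1 \<in> M" "0 \<le> t"
  shows "eventually (\<lambda>n. n \<in> M) at_top"
proof -
  have mult: "int k * x \<in> M" if "x \<in> M" for k x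
    using that assms(1,2) by (induction k) (auto simp: distrib_right)
  have "n \<in> M" if "t * t \<le> n" for n
  proof (cases "t = 0")
    case True
    then show ?thesis
      using mult[OF assms(4), of "nat n"] that by simp
  next
    case False
    then have "t > 0"
      using assms(5) by simp
    define q r where "q = n div t" and "r = n mod t"
    have n: "n = (q - r) * t + r * (t + 1)"
      by (simp add: q_def r_def algebra_simps)
    have "0 \<le> r" "r < t"
      using \<open>t > 0\<close> by (simp_all add: r_def)
    moreover have "t \<le> q"
      using that \<open>t > 0\<close> by (simp add: q_def zdiv_mono1[of "t * t" n t, simplified])
    ultimately show ?thesis
      using mult[OF assms(3), of "nat (q - r)"] mult[OF assms(4), of "nat r"] assms(2) n by simp
  qed
  then show ?thesis
    unfolding eventually_at_top_linorder by blast
qed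

section \<open>Facet forms\<close>

definition is_facet_form :: "(int^'d) set \<Rightarrow> (real^'d) set \<Rightarrow> real^'d \<Rightarrow> bool" where
  "is_facet_form A \<sigma> w \<longleftrightarrow> (\<forall>x\<in>cone_of A. 0 \<le> w \<bullet> x) \<and> (\<forall>x\<in>\<sigma>. w \<bullet> x = 0)
     \<and> range (\<lambda>z. w \<bullet> rvec z) = \<int>"

lemma facet_form_eq_The: "facet_form A \<sigma> = (THE w. is_facet_form A \<sigma> w)"
  unfolding facet_form_def is_facet_form_def ..

lemma Fc_cvec_in_image_iff:
  "Fc A \<sigma> (cvec z) \<in> (\<lambda>m. Fc A \<sigma> (cvec m)) ` M \<longleftrightarrow>
     facet_form A \<sigma> \<bullet> rvec z \<in> (\<lambda>m. facet_form A \<sigma> \<bullet> rvec m) ` M"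
  by (auto simp: Fc_cvec image_iff)

lemma scored_memI:
  assumes "scored A"
    and "\<forall>\<sigma>\<in>facets A. facet_form A \<sigma> \<bullet> rvec z \<in> (\<lambda>m. facet_form A \<sigma> \<bullet> rvec m) ` monoidN A"
  shows "z \<in> monoidN A"
proof (subst assms(1)[unfolded scored_def])
  show "z \<in> {z. \<forall>\<sigma>\<in>facets A. Fc A \<sigma> (cvec z) \<in> (\<lambda>a. Fc A \<sigma> (cvec a)) ` monoidN A}"
    using assms(2) by (simp add: Fc_cvec_in_image_iff)
qed

context
  fixes A :: "(int^'d) set"
  assumes finite_A: "finite A" and zspan_A: "zspan A = UNIV"
begin

lemma span_cone_of: "span (cone_of A) = UNIV"
proof -
  have "Basis \<subseteq> span (cone_of A)"
  proof
    fix b :: "real^'d" assume "b \<in> Basis"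
    then obtain z where "b = rvec z"
      using Basis_subset_range_rvec by blast
    moreover have "rvec z \<in> span (rvec ` A)"
      using rvec_zspan_in_span zspan_A by blast
    moreover have "rvec ` A \<subseteq> cone_of A"
      using rvec_in_cone_of finite_A by blast
    ultimately show "b \<in> span (cone_of A)"
      using span_mono by blast
  qed
  then have "span Basis \<subseteq> span (cone_of A)"
    by (intro span_minimal subspace_span)
  then show ?thesis
    by auto
qed

lemma dim_facet:
  assumes "\<sigma> \<in> facets A"
  shows "dim \<sigma> + 1 = CARD('d)"
proof -
  have "0 \<in> \<sigma>"
    using zero_in_face_of_convex_cone[OF convex_cone_cone_of] assms by (auto simp: facets_def)
  have "aff_dim (cone_of A) = int CARD('d)"
    using aff_dim_zero[OF hull_inc[OF convex_cone_contains_0[OF convex_cone_cone_of]]]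
      dim_span[of "cone_of A"] by (simp add: span_cone_of)
  moreover have "aff_dim \<sigma> = int (dim \<sigma>)"
    by (rule aff_dim_zero[OF hull_inc[OF \<open>0 \<in> \<sigma>\<close>]])
  ultimately show ?thesis
    using assms by (simp add: facets_def)
qed

lemma facet_lattice_basis:
  assumes "\<sigma> \<in> facets A"
  obtains S e where "S \<subseteq> range rvec" "independent S" "span S = span \<sigma>"
    "e \<in> Basis" "e \<notin> span \<sigma>" "card (insert e S) = CARD('d)"
    "\<forall>x. \<exists>t. x - t *\<^sub>R e \<in> span \<sigma>"
proof -
  have face: "\<sigma> face_of cone_of A"
    using assms by (simp add: facets_def)
  obtain S where S: "S \<subseteq> rvec ` Atau A \<sigma>" "independent S" "rvec ` Atau A \<sigma> \<subseteq> span S"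
    "card S = dim (rvec ` Atau A \<sigma>)"
    using basis_exists[of "rvec ` Atau A \<sigma>"] by blast
  have span_S: "span S = span \<sigma>"
    using span_face_of[OF finite_A face] span_mono[OF S(1)] span_minimal[OF S(3) subspace_span]
    by auto
  have "card S + 1 = CARD('d)"
    using S(4) dim_facet[OF assms] dim_span[of \<sigma>] dim_span[of "rvec ` Atau A \<sigma>"]
      span_face_of[OF finite_A face]
    by simp
  then obtain e where "e \<in> Basis" "e \<notin> span S" "card (insert e S) = CARD('d)"
    "\<forall>x. \<exists>t. x - t *\<^sub>R e \<in> span S"
    by (rule complement_Basis_vector[OF S(2)])
  moreover have "S \<subseteq> range rvec"
    using S(1) by blast
  ultimately show thesis
    using that span_S S(2) by simp
qed

lemma facet_integral_normal:
  assumes "\<sigma> \<in> facets A"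
  obtains W where "\<forall>i. W $ i \<in> \<int>" "W \<noteq> 0" "\<forall>x\<in>cone_of A. 0 \<le> W \<bullet> x"
    "\<sigma> = cone_of A \<inter> {x. W \<bullet> x = 0}"
proof -
  obtain a where a: "a \<noteq> 0" "\<forall>x\<in>cone_of A. 0 \<le> a \<bullet> x" "\<sigma> = cone_of A \<inter> {x. a \<bullet> x = 0}"
    using facet_supporting_hyperplane[OF finite_A assms] by blast
  obtain S e where S: "S \<subseteq> range rvec" "independent S" "span S = span \<sigma>"
    and e: "e \<in> Basis" "e \<notin> span \<sigma>" "card (insert e S) = CARD('d)"
    and "\<forall>x. \<exists>t. x - t *\<^sub>R e \<in> span \<sigma>"
    by (rule facet_lattice_basis[OF assms])
  have "insert e S \<subseteq> range rvec"
    using S(1) e(1) Basis_subset_range_rvec by blast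
  moreover have "independent (insert e S)"
    using e(2) S(2,3) by (intro independent_insertI) simp_all
  moreover have "\<forall>s\<in>insert e S - {e}. a \<bullet> s = 0"
    using inner_span_eq_0[of \<sigma> a] a(3) S(3) span_base by blast
  ultimately obtain k where k: "k \<noteq> 0" "\<And>i. k * a $ i \<in> \<int>"
    using integral_multiple_of_normal[OF _ _ e(3) insertI1 _ a(1)] by blast
  show thesis
  proof
    show "\<forall>i. (\<bar>k\<bar> *\<^sub>R a) $ i \<in> \<int>"
    proof
      fix i
      show "(\<bar>k\<bar> *\<^sub>R a) $ i \<in> \<int>"
        using k(2)[of i] by (cases "k \<ge> 0") (auto simp: minus_mult_left[symmetric])
    qed
    show "\<bar>k\<bar> *\<^sub>R a \<noteq> 0" "\<forall>x\<in>cone_of A. 0 \<le> \<bar>k\<bar> *\<^sub>R a \<bullet> x"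
      using a(1,2) k(1) by simp_all
    show "\<sigma> = cone_of A \<inter> {x. \<bar>k\<bar> *\<^sub>R a \<bullet> x = 0}"
      using a(3) k(1) by simp
  qed
qed

lemma is_facet_form_exists:
  assumes "\<sigma> \<in> facets A"
  obtains w where "is_facet_form A \<sigma> w" "\<sigma> = cone_of A \<inter> {x. w \<bullet> x = 0}"
proof -
  obtain W where W: "\<forall>i. W $ i \<in> \<int>" "W \<noteq> 0" "\<forall>x\<in>cone_of A. 0 \<le> W \<bullet> x"
    "\<sigma> = cone_of A \<inter> {x. W \<bullet> x = 0}"
    by (rule facet_integral_normal[OF assms])
  obtain g where g: "g > 0" "range (\<lambda>z. ((1 / g) *\<^sub>R W) \<bullet> rvec z) = \<int>"
    using primitive_rescaling[of W] W(1,2) by blast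
  show thesis
  proof
    show "is_facet_form A \<sigma> ((1 / g) *\<^sub>R W)"
      unfolding is_facet_form_def using W(3,4) g by simp
    show "\<sigma> = cone_of A \<inter> {x. (1 / g) *\<^sub>R W \<bullet> x = 0}"
      using W(4) g(1) by simp
  qed
qed

lemma is_facet_form_proportional:
  assumes "\<sigma> \<in> facets A" "is_facet_form A \<sigma> w" "is_facet_form A \<sigma> w'"
  shows "\<exists>k. w' = k *\<^sub>R w"
proof -
  obtain e where e: "\<forall>x. \<exists>t. x - t *\<^sub>R e \<in> span \<sigma>"
    by (rule facet_lattice_basis[OF assms(1)])
  have w_span: "\<forall>s\<in>span \<sigma>. w \<bullet> s = 0" and w'_span: "\<forall>s\<in>span \<sigma>. w' \<bullet> s = 0"
    using assms(2,3) inner_span_eq_0 unfolding is_facet_form_def by blast+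
  obtain z where z: "w \<bullet> rvec z = 1"
    using assms(2) unfolding is_facet_form_def by (metis Ints_1 rangeE)
  have "w \<bullet> e \<noteq> 0"
  proof
    assume "w \<bullet> e = 0"
    obtain t where "rvec z - t *\<^sub>R e \<in> span \<sigma>"
      using e by blast
    then show False
      using w_span z \<open>w \<bullet> e = 0\<close> by (auto simp: inner_diff_right)
  qed
  then show ?thesis
    using proportional_if_same_hyperplane[OF e w'_span w_span] by blast
qed

lemma is_facet_form_unique:
  assumes "\<sigma> \<in> facets A" "is_facet_form A \<sigma> w" "is_facet_form A \<sigma> w'"
  shows "w' = w"
proof -
  obtain k where w': "w' = k *\<^sub>R w"
    using is_facet_form_proportional[OF assms] by blast
  obtain z1 where z1: "w \<bullet> rvec z1 = 1"
    using assms(2) unfolding is_facet_form_def by (metis Ints_1 rangeE)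
  obtain z2 where z2: "w' \<bullet> rvec z2 = 1"
    using assms(3) unfolding is_facet_form_def by (metis Ints_1 rangeE)
  have "k \<in> \<int>"
    using assms(3) z1 w' unfolding is_facet_form_def by (metis inner_scaleR_left mult.right_neutral rangeI)
  have "\<exists>x\<in>cone_of A. w \<bullet> x \<noteq> 0"
  proof (rule ccontr)
    assume "\<not> ?thesis"
    then have "w \<bullet> rvec z1 = 0"
      using inner_span_eq_0[of "cone_of A" w] span_cone_of by auto
    then show False
      using z1 by simp
  qed
  then obtain x where "x \<in> cone_of A" "w \<bullet> x > 0"
    using assms(2) unfolding is_facet_form_def by force
  moreover have "0 \<le> k * (w \<bullet> x)" if "x \<in> cone_of A"
    using assms(3) that w' unfolding is_facet_form_def by auto
  ultimately have "0 \<le> k"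
    by (simp add: zero_le_mult_iff)
  moreover have "w \<bullet> rvec z2 \<in> \<int>" "k * (w \<bullet> rvec z2) = 1"
    using assms(2) z2 w' unfolding is_facet_form_def by auto
  ultimately have "k = 1"
    using Ints_nonneg_mult_eq_1 \<open>k \<in> \<int>\<close> by blast
  then show ?thesis
    using w' by simp
qed

lemma facet_form_eq:
  assumes "\<sigma> \<in> facets A" "is_facet_form A \<sigma> w"
  shows "facet_form A \<sigma> = w"
  unfolding facet_form_eq_The using assms(2) is_facet_form_unique[OF assms]
  by (rule the_equality)

lemma is_facet_form_facet_form: "\<sigma> \<in> facets A \<Longrightarrow> is_facet_form A \<sigma> (facet_form A \<sigma>)"
  using is_facet_form_exists facet_form_eq by metis

lemma facet_eq_kernel_facet_form: "\<sigma> \<in> facets A \<Longrightarrow> \<sigma> = cone_of A \<inter> {x. facet_form A \<sigma> \<bullet> x = 0}"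
  using is_facet_form_exists facet_form_eq by metis

lemma facet_form_rvec_Ints: "\<sigma> \<in> facets A \<Longrightarrow> facet_form A \<sigma> \<bullet> rvec z \<in> \<int>"
  using is_facet_form_facet_form unfolding is_facet_form_def by blast

lemma facet_form_nonneg: "\<sigma> \<in> facets A \<Longrightarrow> x \<in> cone_of A \<Longrightarrow> 0 \<le> facet_form A \<sigma> \<bullet> x"
  using is_facet_form_facet_form unfolding is_facet_form_def by blast

lemma facet_form_eq_0: "\<sigma> \<in> facets A \<Longrightarrow> x \<in> \<sigma> \<Longrightarrow> facet_form A \<sigma> \<bullet> x = 0"
  using is_facet_form_facet_form unfolding is_facet_form_def by blast

lemma facet_form_eq_1: "\<sigma> \<in> facets A \<Longrightarrow> \<exists>z. facet_form A \<sigma> \<bullet> rvec z = 1"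
  using is_facet_form_facet_form unfolding is_facet_form_def by (metis Ints_1 rangeE)

section \<open>Scored semigroups\<close>

lemma facet_form_monoidN_eventually:
  assumes "\<sigma> \<in> facets A"
  shows "eventually (\<lambda>n. \<exists>m\<in>monoidN A. facet_form A \<sigma> \<bullet> rvec m = of_int n) at_top"
proof -
  let ?F = "\<lambda>z. facet_form A \<sigma> \<bullet> rvec z"
  define M where "M = {n. \<exists>m\<in>monoidN A. ?F m = of_int n}"
  have "0 \<in> M"
    unfolding M_def using monoidN_0 by force
  have add: "x + y \<in> M" if "x \<in> M" "y \<in> M" for x y
    using that monoidN_add unfolding M_def by (force simp: rvec_add inner_add_right)
  obtain z where "?F z = 1"
    using facet_form_eq_1[OF assms] by blast
  obtain m1 m2 where m: "m1 \<in> monoidN A" "m2 \<in> monoidN A" "z = m1 - m2"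
    using zspan_eq_diff_monoidN zspan_A by blast
  define t where "t = \<lfloor>?F m2\<rfloor>"
  have t: "?F m2 = of_int t"
    unfolding t_def using facet_form_rvec_Ints[OF assms] by simp
  then have "0 \<le> t"
    using facet_form_nonneg[OF assms rvec_monoidN_in_cone_of[OF m(2)]] by simp
  have "?F m1 = of_int (t + 1)"
    using \<open>?F z = 1\<close> m(3) t by (simp add: rvec_diff inner_diff_right)
  then have "t + 1 \<in> M"
    using m(1) unfolding M_def by blast
  moreover have "t \<in> M"
    using m(2) t unfolding M_def by blast
  ultimately show ?thesis
    using int_submonoid_eventually_mem[OF \<open>0 \<in> M\<close> add _ _ \<open>0 \<le> t\<close>]
    unfolding M_def by simp
qed

lemma facet_forms_monoidN_eventually:
  "\<exists>c. \<forall>n\<ge>c. \<forall>\<sigma>\<in>facets A. \<exists>m\<in>monoidN A. facet_form A \<sigma> \<bullet> rvec m = of_int n"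
proof -
  have "eventually (\<lambda>n. \<forall>\<sigma>\<in>facets A. \<exists>m\<in>monoidN A. facet_form A \<sigma> \<bullet> rvec m = of_int n) at_top"
    using finite_facets[OF finite_A] facet_form_monoidN_eventually
    by (intro eventually_ball_finite) auto
  then show ?thesis
    unfolding eventually_at_top_linorder .
qed

lemma facet_form_eq_0_span_face:
  assumes "\<sigma> \<in> facets A" "\<tau> \<subseteq> \<sigma>" "x \<in> span (rvec ` Atau A \<tau>)"
  shows "facet_form A \<sigma> \<bullet> x = 0"
  using assms facet_form_eq_0[OF assms(1)]
  by (intro inner_span_eq_0[OF _ assms(3)]) (auto simp: Atau_def)

lemma facet_form_sum_face_ge_1:
  assumes "\<sigma> \<in> facets A" "\<tau> face_of cone_of A" "\<not> \<tau> \<subseteq> \<sigma>"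
  shows "1 \<le> facet_form A \<sigma> \<bullet> rvec (\<Sum>b\<in>Atau A \<tau>. b)"
proof -
  let ?F = "facet_form A \<sigma>"
  obtain x where x: "x \<in> \<tau>" "x \<notin> \<sigma>"
    using assms(3) by blast
  have "x \<in> cone_of A"
    using x(1) face_of_imp_subset[OF assms(2)] by blast
  then obtain c where c: "x = (\<Sum>a\<in>A. c a *\<^sub>R rvec a)" "\<forall>a\<in>A. 0 \<le> c a"
    unfolding cone_of_def by blast
  have "?F \<bullet> x \<noteq> 0"
    using facet_eq_kernel_facet_form[OF assms(1)] x \<open>x \<in> cone_of A\<close> by blast
  then have "0 < (\<Sum>a\<in>A. c a * (?F \<bullet> rvec a))"
    using facet_form_nonneg[OF assms(1) \<open>x \<in> cone_of A\<close>]
    by (simp add: c(1) inner_sum_right)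
  then have "\<not> (\<forall>a\<in>A. c a * (?F \<bullet> rvec a) \<le> 0)"
    using sum_nonpos[of A "\<lambda>a. c a * (?F \<bullet> rvec a)"] by fastforce
  then obtain a where a: "a \<in> A" "0 < c a * (?F \<bullet> rvec a)"
    by (auto simp: not_le)
  then have "0 < c a" "0 < ?F \<bullet> rvec a"
    using c(2) facet_form_nonneg[OF assms(1) rvec_in_cone_of[OF finite_A a(1)]]
    by (auto simp: zero_less_mult_iff)
  then have "a \<in> Atau A \<tau>"
    using face_of_cone_of_generator[OF finite_A assms(2) c(2)] c(1) x(1) a(1)
    by (auto simp: Atau_def)
  have "1 \<le> ?F \<bullet> rvec a"
    using \<open>0 < ?F \<bullet> rvec a\<close> facet_form_rvec_Ints[OF assms(1)]
    by (metis Ints_cases int_one_le_iff_zero_less of_int_0_less_iff of_int_1_le_iff)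
  also have "\<dots> \<le> (\<Sum>b\<in>Atau A \<tau>. ?F \<bullet> rvec b)"
    using \<open>a \<in> Atau A \<tau>\<close> finite_A facet_form_nonneg[OF assms(1)] rvec_in_cone_of
    by (intro member_le_sum) (auto simp: Atau_def)
  also have "\<dots> = ?F \<bullet> rvec (\<Sum>b\<in>Atau A \<tau>. b)"
    by (simp add: rvec_sum inner_sum_right)
  finally show ?thesis .
qed

lemma facet_form_add_face_sum:
  assumes "\<sigma> \<in> facets A" "\<tau> face_of cone_of A" "\<not> \<tau> \<subseteq> \<sigma>"
  shows "\<exists>n. facet_form A \<sigma> \<bullet> rvec (z + int N *s (\<Sum>b\<in>Atau A \<tau>. b)) = of_int n
    \<and> \<lfloor>facet_form A \<sigma> \<bullet> rvec z\<rfloor> + int N \<le> n"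
proof -
  define fz fp where "fz = \<lfloor>facet_form A \<sigma> \<bullet> rvec z\<rfloor>"
    and "fp = \<lfloor>facet_form A \<sigma> \<bullet> rvec (\<Sum>b\<in>Atau A \<tau>. b)\<rfloor>"
  have "facet_form A \<sigma> \<bullet> rvec (z + int N *s (\<Sum>b\<in>Atau A \<tau>. b)) = of_int (fz + int N * fp)"
    using facet_form_rvec_Ints[OF assms(1)]
    by (simp add: fz_def fp_def rvec_add rvec_smult inner_add_right)
  moreover have "1 \<le> fp"
    using facet_form_sum_face_ge_1[OF assms] by (simp add: fp_def le_floor_iff)
  then have "fz + int N \<le> fz + int N * fp"
    by (simp add: mult_le_cancel_left1)
  ultimately show ?thesis
    unfolding fz_def by blast
qed

lemma scored_shift_into_monoidN:
  assumes "scored A" "\<tau> face_of cone_of A"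
    and z: "\<forall>\<sigma>\<in>facets A. \<tau> \<subseteq> \<sigma> \<longrightarrow>
      facet_form A \<sigma> \<bullet> rvec z \<in> (\<lambda>m. facet_form A \<sigma> \<bullet> rvec m) ` monoidN A"
  shows "\<exists>y\<in>zspan (Atau A \<tau>). z + y \<in> monoidN A"
proof -
  define p where "p = (\<Sum>b\<in>Atau A \<tau>. b)"
  have "p \<in> zspan (Atau A \<tau>)"
    unfolding p_def zspan_def by (auto intro: exI[of _ "\<lambda>_. 1"])
  obtain c where c: "\<forall>n\<ge>c. \<forall>\<sigma>\<in>facets A. \<exists>m\<in>monoidN A. facet_form A \<sigma> \<bullet> rvec m = of_int n"
    using facet_forms_monoidN_eventually by blast
  define N where "N = (\<Sum>\<sigma>\<in>facets A. nat (c - \<lfloor>facet_form A \<sigma> \<bullet> rvec z\<rfloor>))"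
  define y where "y = int N *s p"
  have "y \<in> zspan (Atau A \<tau>)"
    unfolding y_def using \<open>p \<in> zspan (Atau A \<tau>)\<close> by (rule zspan_smult)
  have "facet_form A \<sigma> \<bullet> rvec (z + y) \<in> (\<lambda>m. facet_form A \<sigma> \<bullet> rvec m) ` monoidN A"
    if \<sigma>: "\<sigma> \<in> facets A" for \<sigma>
  proof (cases "\<tau> \<subseteq> \<sigma>")
    case True
    have "facet_form A \<sigma> \<bullet> rvec y = 0"
      using facet_form_eq_0_span_face[OF \<sigma> True
          rvec_zspan_in_span[OF \<open>y \<in> zspan (Atau A \<tau>)\<close>]] .
    then show ?thesis
      using z \<sigma> True by (simp add: rvec_add inner_add_right)
  next
    case False
    obtain n where n: "facet_form A \<sigma> \<bullet> rvec (z + y) = of_int n"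
      "\<lfloor>facet_form A \<sigma> \<bullet> rvec z\<rfloor> + int N \<le> n"
      using facet_form_add_face_sum[OF \<sigma> assms(2) False, of z N] unfolding y_def p_def by blast
    have "nat (c - \<lfloor>facet_form A \<sigma> \<bullet> rvec z\<rfloor>) \<le> N"
      unfolding N_def using finite_facets[OF finite_A] \<sigma> by (intro member_le_sum) auto
    then have "c \<le> n"
      using n(2) by (simp add: nat_le_iff)
    then obtain m where "m \<in> monoidN A" "facet_form A \<sigma> \<bullet> rvec m = of_int n"
      using c \<sigma> by blast
    then show ?thesis
      using n(1) by (metis rev_image_eqI)
  qed
  then have "z + y \<in> monoidN A"
    using scored_memI[OF assms(1)] by blast
  then show ?thesis
    using \<open>y \<in> zspan (Atau A \<tau>)\<close> by blast
qed

section \<open>The sets \<open>E\<^sub>\<tau>(\<alpha>)\<close>\<close>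

lemma Fc_eq_0_cspan_face:
  assumes "\<sigma> \<in> facets A" "\<tau> \<subseteq> \<sigma>" "l \<in> cspan (Atau A \<tau>)"
  shows "Fc A \<sigma> l = 0"
proof -
  obtain c where "l = (\<Sum>b\<in>Atau A \<tau>. c b *s cvec b)"
    using assms(3) unfolding cspan_def by blast
  moreover have "Fc A \<sigma> (cvec b) = 0" if "b \<in> Atau A \<tau>" for b
    using facet_form_eq_0_span_face[OF assms(1,2), of "rvec b"] that
    by (simp add: Fc_cvec span_base)
  ultimately show ?thesis
    by (simp add: Fc_sum_scale)
qed

lemma Face_if_Eset_nonempty:
  assumes "\<tau> \<in> faces A" "Eset A \<tau> \<alpha> \<noteq> {}"
  shows "\<tau> \<in> Face A \<alpha>"
proof -
  obtain l m z where l: "l \<in> cspan (Atau A \<tau>)" and m: "m \<in> monoidN A"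
    and z: "z \<in> zspan (Atau A \<tau>)" and \<alpha>: "\<alpha> - l = cvec (m + z)"
    using assms(2) unfolding Eset_def by blast
  have "Fc A \<sigma> \<alpha> = Fc A \<sigma> (cvec m)" if \<sigma>: "\<sigma> \<in> facets A" "\<tau> \<subseteq> \<sigma>" for \<sigma>
  proof -
    have "\<alpha> = l + cvec m + cvec z"
      using \<alpha> by (simp add: cvec_add algebra_simps)
    moreover have "Fc A \<sigma> l = 0"
      by (rule Fc_eq_0_cspan_face[OF \<sigma> l])
    moreover have "Fc A \<sigma> (cvec z) = 0"
      using facet_form_eq_0_span_face[OF \<sigma> rvec_zspan_in_span[OF z]]
      by (simp add: Fc_cvec)
    ultimately show ?thesis
      by (simp add: Fc_add)
  qed
  then show ?thesis
    using assms(1) l \<alpha> m unfolding Face_def Fplus_def by blast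
qed

lemma reflected_coset_in_Eset:
  assumes "scored A" "\<tau> \<in> Face A \<alpha>" "l0 \<in> cspan (Atau A \<tau>)" "\<alpha> - l0 = cvec z0"
    "rvec y \<in> qspan (Atau A \<tau>)"
  shows "(\<lambda>x. l0 - cvec x) ` (\<lambda>x. y + x) ` zspan (Atau A \<tau>) \<in> Eset A \<tau> \<alpha>"
proof -
  have "facet_form A \<sigma> \<bullet> rvec (z0 + y) \<in> (\<lambda>m. facet_form A \<sigma> \<bullet> rvec m) ` monoidN A"
    if \<sigma>: "\<sigma> \<in> facets A" "\<tau> \<subseteq> \<sigma>" for \<sigma>
  proof -
    have "Fc A \<sigma> \<alpha> \<in> (\<lambda>m. Fc A \<sigma> (cvec m)) ` monoidN A"
      using assms(2) \<sigma> unfolding Face_def Fplus_def by blast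
    moreover have "\<alpha> = l0 + cvec (z0 + y) - cvec y"
      using assms(4) by (simp add: cvec_add algebra_simps)
    moreover have "Fc A \<sigma> l0 = 0"
      by (rule Fc_eq_0_cspan_face[OF \<sigma> assms(3)])
    moreover have "Fc A \<sigma> (cvec y) = 0"
      using facet_form_eq_0_span_face[OF \<sigma>] assms(5) qspan_subset_span
      by (auto simp: Fc_cvec)
    ultimately show ?thesis
      by (simp add: Fc_add Fc_diff Fc_cvec_in_image_iff)
  qed
  moreover have "\<tau> face_of cone_of A"
    using assms(2) unfolding Face_def faces_def by blast
  ultimately obtain y' where y': "y' \<in> zspan (Atau A \<tau>)" "z0 + y + y' \<in> monoidN A"
    using scored_shift_into_monoidN[OF assms(1)] by blast
  have "\<alpha> - (l0 - cvec y) = cvec ((z0 + y + y') + - y')"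
    using assms(4) by (simp add: cvec_add algebra_simps)
  then have "\<alpha> - (l0 - cvec y) \<in> cvec ` {m + z |m z. m \<in> monoidN A \<and> z \<in> zspan (Atau A \<tau>)}"
    using y' zspan_minus by blast
  moreover have "l0 - cvec y \<in> cspan (Atau A \<tau>)"
    using assms(3) cvec_in_cspan_if_qspan[OF assms(5)] by (rule cspan_diff)
  moreover have "(\<lambda>x. l0 - cvec x) ` (\<lambda>x. y + x) ` zspan (Atau A \<tau>) =
      (\<lambda>x. (l0 - cvec y) + cvec x) ` zspan (Atau A \<tau>)"
    by (rule image_reflected_coset[OF zspan_minus])
  ultimately show ?thesis
    unfolding Eset_def by (intro CollectI exI[of _ "l0 - cvec y"] conjI) simp_all
qed

lemma Eset_eq_reflected_coset:
  assumes "l0 \<in> cspan (Atau A \<tau>)" "\<alpha> - l0 = cvec z0" "X \<in> Eset A \<tau> \<alpha>"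
  obtains y where "rvec y \<in> qspan (Atau A \<tau>)"
    "X = (\<lambda>x. l0 - cvec x) ` (\<lambda>x. y + x) ` zspan (Atau A \<tau>)"
proof -
  obtain l u where X: "X = (\<lambda>x. l + cvec x) ` zspan (Atau A \<tau>)"
    and l: "l \<in> cspan (Atau A \<tau>)" and u: "\<alpha> - l = cvec u"
    using assms(3) unfolding Eset_def by blast
  define y where "y = u - z0"
  have "cvec y = l0 - l"
    using u assms(2) unfolding y_def by (simp add: cvec_diff algebra_simps)
  then have "cvec y \<in> cspan (Atau A \<tau>)"
    using assms(1) l by (simp add: cspan_diff)
  moreover have "finite (Atau A \<tau>)"
    using finite_A by (simp add: Atau_def)
  ultimately have "rvec y \<in> qspan (Atau A \<tau>)"
    using rvec_in_qspan rvec_in_span_if_cspan by blast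
  moreover have "X = (\<lambda>x. l0 - cvec x) ` (\<lambda>x. y + x) ` zspan (Atau A \<tau>)"
    using image_reflected_coset[OF zspan_minus, of "Atau A \<tau>" l0 y] \<open>cvec y = l0 - l\<close>
    unfolding X by simp
  ultimately show thesis
    using that by blast
qed

lemma full_if_Face:
  assumes "scored A" "\<tau> \<in> Face A \<alpha>"
  shows "full A \<tau> \<alpha>"
proof -
  obtain l0 z0 where l0: "l0 \<in> cspan (Atau A \<tau>)" "\<alpha> - l0 = cvec z0"
    using assms(2) unfolding Face_def by blast
  define L where "L = {(\<lambda>x. y + x) ` zspan (Atau A \<tau>) | y. rvec y \<in> qspan (Atau A \<tau>)}"
  have "Eset A \<tau> \<alpha> = (\<lambda>K. (\<lambda>x. l0 - cvec x) ` K) ` L"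
    using reflected_coset_in_Eset[OF assms l0] Eset_eq_reflected_coset[OF l0]
    unfolding L_def by blast
  moreover have "inj (\<lambda>x. l0 - cvec x)"
    using inj_cvec by (auto simp: inj_def)
  then have "inj_on (\<lambda>K. (\<lambda>x. l0 - cvec x) ` K) L"
    by (auto intro!: inj_onI simp: inj_image_eq_iff)
  ultimately show ?thesis
    unfolding full_def lattice_index_def L_def[symmetric] by (simp add: card_image)
qed

end

theorem proposition8p23:
  fixes A :: "(int^'d) set" and \<alpha> :: "complex^'d"
  assumes "finite A" and "zspan A = UNIV" and "scored A"
  shows "extreme A \<alpha>"
  unfolding extreme_def
  using full_if_Face[OF assms] Face_if_Eset_nonempty[OF assms(1,2)] by blast

end
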